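(* Let $k\ge 4$ and $n\ge 2$ be integers, and let $\ket{a_1},\dots,\ket{a_n},\ket{b_1},\dots,\ket{b_n}\in\mathbb{C}^k$ be vectors such that the set $\{\ket{a_1},\dots,\ket{a_n},\ket{b_1},\dots,\ket{b_n}\}$ is linearly independent (so $2n\le k$). Put $\ket{v}=\sum_{i=1}^n \ket{a_i}\otimes\ket{b_i}\in\mathbb{C}^k\otimes\mathbb{C}^k$ and, for $\varepsilon>0$, $$\gamma_\varepsilon=\mathbb{I}+\mathbb{F}+\varepsilon\,\ket{v}\!\bra{v},$$ where $\mathbb{I}$ is the identity on $\mathbb{C}^k\otimes\mathbb{C}^k$ and $\mathbb{F}=\sum_{i,j=1}^k\ket{i}\!\bra{j}\otimes\ket{j}\!\bra{i}$ is the swap operator. Then there exists $\varepsilon_0>0$ such that for every $0<\varepsilon<\varepsilon_0$, the normalized state $\gamma_\varepsilon/\mathrm{Tr}(\gamma_\varepsilon)$ is entangled, has positive semidefinite partial transpose (i.e. it is a PPT entangled, or bound entangled, state), and its realignment $\mathcal{R}(\gamma_\varepsilon)$ is an invertible matrix (i.e. the state is faithful and hence can serve as a probe state for ancilla-assisted quantum process tomography).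
   Context: $\{\ket{i}\}_{i=1}^k$ is the computational basis of $\mathbb{C}^k$. For an operator $\rho=\sum_{i,j,k,l}\rho_{ij,kl}\,\ket{i}\!\bra{j}\otimes\ket{k}\!\bra{l}$ on $\mathbb{C}^k\otimes\mathbb{C}^k$, the realignment is $\mathcal{R}(\rho)=\sum_{i,j,k,l}\rho_{ij,kl}\,\ket{i}\!\bra{k}\otimes\ket{j}\!\bra{l}$. The partial transpose $\rho^\Gamma$ is the transpose on the second tensor factor in the computational basis. A bipartite state is called faithful if $\mathcal{R}(\rho)$ has no zero singular values (is invertible); faithfulness is the condition under which the state can replace the maximally entangled state in ancilla-assisted quantum process tomography. A state is entangled if it is not a convex combination of product states. *)

theory Defs
  imports "HOL-Analysis.Analysis"
begin

text \<open>Operators on C^k (x) C^k are matrices indexed by the finite type 'k \<times> 'k,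
  where the pair (i,k) stands for the basis vector |i> (x) |k>.\<close>

type_synonym ('k) bimat = "complex ^ ('k \<times> 'k) ^ ('k \<times> 'k)"

definition mtrace :: "complex ^ 'n ^ 'n \<Rightarrow> complex" where
  "mtrace M = (\<Sum>i\<in>UNIV. M $ i $ i)"

definition psd :: "complex ^ 'n ^ 'n \<Rightarrow> bool" where
  "psd M \<longleftrightarrow> (\<forall>x :: complex ^ 'n.
     let q = (\<Sum>i\<in>UNIV. cnj (x $ i) * (M *v x) $ i) in Im q = 0 \<and> Re q \<ge> 0)"

definition density :: "complex ^ 'n ^ 'n \<Rightarrow> bool" where
  "density M \<longleftrightarrow> psd M \<and> mtrace M = 1"

definition kron :: "complex ^ 'k::finite ^ 'k \<Rightarrow> complex ^ 'k ^ 'k \<Rightarrow> 'k bimat" where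
  "kron A B = (\<chi> p q. A $ fst p $ fst q * B $ snd p $ snd q)"

definition separable :: "('k::finite) bimat \<Rightarrow> bool" where
  "separable \<rho> \<longleftrightarrow> (\<exists>(m::nat) (p :: nat \<Rightarrow> real) \<sigma> \<tau>.
      (\<forall>j<m. p j \<ge> 0 \<and> density (\<sigma> j) \<and> density (\<tau> j)) \<and>
      (\<Sum>j<m. p j) = 1 \<and>
      \<rho> = (\<Sum>j<m. (\<chi> r s. complex_of_real (p j) * kron (\<sigma> j) (\<tau> j) $ r $ s)))"

definition entangled :: "('k::finite) bimat \<Rightarrow> bool" where
  "entangled \<rho> \<longleftrightarrow> density \<rho> \<and> \<not> separable \<rho>"

definition ptrans :: "('k::finite) bimat \<Rightarrow> 'k bimat" where
  "ptrans M = (\<chi> r s. M $ (fst r, snd s) $ (fst s, snd r))"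

definition realign :: "('k::finite) bimat \<Rightarrow> 'k bimat" where
  "realign M = (\<chi> r s. M $ (fst r, fst s) $ (snd r, snd s))"

definition swap_op :: "('k::finite) bimat" where
  "swap_op = (\<chi> r s. if fst r = snd s \<and> snd r = fst s then 1 else 0)"

definition ketbra :: "complex ^ 'n \<Rightarrow> complex ^ 'n ^ 'n" where
  "ketbra v = (\<chi> r s. v $ r * cnj (v $ s))"

definition tensor_vec :: "complex ^ 'k::finite \<Rightarrow> complex ^ 'k \<Rightarrow> complex ^ ('k \<times> 'k)" where
  "tensor_vec a b = (\<chi> p. a $ fst p * b $ snd p)"

definition gamma :: "nat \<Rightarrow> (nat \<Rightarrow> complex ^ 'k::finite) \<Rightarrow> (nat \<Rightarrow> complex ^ 'k) \<Rightarrow> real \<Rightarrow> 'k bimat" where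
  "gamma n a b \<epsilon> = (let v = (\<Sum>i<n. tensor_vec (a i) (b i)) in
      mat 1 + swap_op + (\<chi> r s. complex_of_real \<epsilon> * ketbra v $ r $ s))"

definition normalize_op :: "complex ^ 'n ^ 'n \<Rightarrow> complex ^ 'n ^ 'n" where
  "normalize_op M = (\<chi> r s. M $ r $ s / mtrace M)"

end

(*
  Write w for the antisymmetric part of v. The range of I + F is the symmetric subspace, so
  on an antisymmetric vector z the form <z, gamma z> is eps |<w, z>|^2. If gamma were separable
  it would be a sum of projections onto product vectors x (x) y, each orthogonal to every
  antisymmetric z orthogonal to w; the antisymmetric part of x (x) y would then be a multiple
  of w. But antisymmetrised product vectors have rank two, so all their 4x4 Pfaffians vanish,
  whereas w, built from the independent a_i and b_i, has a nonzero one: gamma is entangled.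
  Its partial transpose is I + |Omega><Omega| + eps (|v><v|)^Gamma with Omega = sum_i |ii>, and
  its realignment is |Omega><Omega| + F + eps R(|v><v|), where |Omega><Omega| + F does not
  shrink any vector. Both properties of the unperturbed operators survive small eps.
*)

theory Submission
  imports Defs
begin

section \<open>Complex inner product and positive semidefinite matrices\<close>

definition cinner :: "complex ^ 'n \<Rightarrow> complex ^ 'n \<Rightarrow> complex" where
  "cinner x y = (\<Sum>i\<in>UNIV. cnj (x $ i) * y $ i)"

definition qform :: "complex ^ 'n ^ 'n \<Rightarrow> complex ^ 'n \<Rightarrow> complex" where
  "qform M x = cinner x (M *v x)"

lemma psd_iff_qform: "psd M \<longleftrightarrow> (\<forall>x. Im (qform M x) = 0 \<and> 0 \<le> Re (qform M x))"
  by (simp add: psd_def qform_def cinner_def Let_def)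

lemma cnj_cinner: "cnj (cinner x y) = cinner y x"
  by (simp add: cinner_def mult.commute)

lemma Re_cinner: "Re (cinner x y) = inner x y"
  by (simp add: cinner_def inner_vec_def inner_complex_def)

lemma cinner_self: "cinner x x = of_real ((norm x)\<^sup>2)"
proof -
  have "Im (cinner x x) = 0"
    by (simp add: cinner_def)
  moreover have "Re (cinner x x) = (norm x)\<^sup>2"
    by (simp add: Re_cinner power2_norm_eq_inner)
  ultimately show ?thesis
    by (simp add: complex_eq_iff)
qed

lemma cinner_self_eq_0_iff [simp]: "cinner x x = 0 \<longleftrightarrow> x = 0"
  by (simp add: cinner_self)

lemma cinner_add_left: "cinner (x + y) z = cinner x z + cinner y z"
  and cinner_add_right: "cinner x (y + z) = cinner x y + cinner x z"
  and cinner_diff_left: "cinner (x - y) z = cinner x z - cinner y z"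
  and cinner_diff_right: "cinner x (y - z) = cinner x y - cinner x z"
  and cinner_smult_left: "cinner (c *s x) z = cnj c * cinner x z"
  and cinner_smult_right: "cinner x (c *s z) = c * cinner x z"
  by (simp_all add: cinner_def algebra_simps sum.distrib sum_subtractf sum_distrib_left)

lemma cinner_axis_left: "cinner (axis i 1) x = x $ i"
  by (simp add: cinner_def axis_def if_distrib if_distribR cong: if_cong)

lemma mult_axis_component: "(M *v axis j 1) $ i = M $ i $ j"
  by (simp add: matrix_vector_mult_def axis_def if_distrib if_distribR cong: if_cong)

lemma cinner_axis_mult_axis: "cinner (axis i 1) (M *v axis j 1) = M $ i $ j"
  by (simp add: cinner_axis_left mult_axis_component)

lemma cnj_mult_self: "cnj z * z = of_real ((cmod z)\<^sup>2)"
  by (metis complex_norm_square mult.commute)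

lemma qform_expand: "qform M x = (\<Sum>i\<in>UNIV. \<Sum>j\<in>UNIV. cnj (x $ i) * M $ i $ j * x $ j)"
  by (simp add: qform_def cinner_def matrix_vector_mult_def sum_distrib_left mult.assoc)

lemma qform_add: "qform (A + B) x = qform A x + qform B x"
  by (simp add: qform_def matrix_vector_mult_add_rdistrib cinner_add_right)

lemma qform_diff: "qform (A - B) x = qform A x - qform B x"
  by (simp add: qform_def matrix_vector_mult_diff_rdistrib cinner_diff_right)

lemma scaleR_matrix_component: "(c *\<^sub>R A) $ i $ j = of_real c * A $ i $ j"
  unfolding vector_scaleR_component by (simp add: scaleR_conv_of_real)

lemma matrix_of_real_mult_eq_scaleR: "(\<chi> i j. of_real c * A $ i $ j) = c *\<^sub>R A"
  unfolding vec_eq_iff scaleR_matrix_component by simp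

lemma scaleR_matrix_vector_mult: "(c *\<^sub>R A) *v x = c *\<^sub>R (A *v x)"
  for A :: "complex ^ 'n ^ 'm"
  by (simp add: vec_eq_iff matrix_vector_mult_def scaleR_sum_right)

lemma qform_scaleR: "qform (c *\<^sub>R A) x = of_real c * qform A x"
  unfolding qform_expand scaleR_matrix_component by (simp add: sum_distrib_left mult_ac)

lemma qform_sum: "qform (\<Sum>j\<in>J. A j) x = (\<Sum>j\<in>J. qform (A j) x)"
proof (induction J rule: infinite_finite_induct)
  case (insert j J)
  then show ?case
    by (simp add: qform_add)
qed (simp_all add: qform_expand)

lemma qform_mat_1: "qform (mat 1) x = of_real ((norm x)\<^sup>2)"
  by (simp add: qform_def cinner_self)

lemma qform_ketbra_cnj_mult: "qform (ketbra y) x = cnj (cinner y x) * cinner y x"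
  by (simp add: qform_expand cinner_def ketbra_def sum_distrib_left sum_distrib_right
      sum_product algebra_simps)

lemma qform_ketbra: "qform (ketbra y) x = of_real ((cmod (cinner y x))\<^sup>2)"
  by (simp add: qform_ketbra_cnj_mult cnj_mult_self)

lemma ketbra_mult: "ketbra y *v x = cinner y x *s y"
  by (simp add: ketbra_def cinner_def matrix_vector_mult_def vec_eq_iff sum_distrib_left mult_ac)

lemma qform_add_vec:
  "qform M (x + y) = qform M x + qform M y + cinner x (M *v y) + cinner y (M *v x)"
  by (simp add: qform_def matrix_vector_right_distrib cinner_add_left cinner_add_right)

lemma qform_smult_vec: "qform M (c *s x) = of_real ((cmod c)\<^sup>2) * qform M x"
  by (simp add: qform_def vector_scalar_commute cinner_smult_left cinner_smult_right
      complex_norm_square[symmetric])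

lemma psd_add: "psd A \<Longrightarrow> psd B \<Longrightarrow> psd (A + B)"
  by (simp add: psd_iff_qform qform_add)

lemma psd_scaleR: "psd A \<Longrightarrow> 0 \<le> c \<Longrightarrow> psd (c *\<^sub>R A)"
  by (simp add: psd_iff_qform qform_scaleR)

lemma psd_ketbra: "psd (ketbra y)"
  by (simp add: psd_iff_qform qform_ketbra)

lemma psd_cinner_mult_sym:
  assumes "psd M"
  shows "cinner x (M *v y) = cnj (cinner y (M *v x))"
proof -
  define p q where "p = cinner x (M *v y)" and "q = cinner y (M *v x)"
  have real: "Im (qform M z) = 0" for z
    using assms by (simp add: psd_iff_qform)
  have "Im (p + q) = 0"
    using real[of "x + y"] real[of x] real[of y] by (simp add: qform_add_vec p_def q_def)
  moreover have "Re (q - p) = 0"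
    using real[of "\<i> *s x + y"] real[of "\<i> *s x"] real[of y]
    by (simp add: qform_add_vec p_def q_def vector_scalar_commute cinner_smult_left
        cinner_smult_right)
  ultimately show ?thesis
    by (simp add: complex_eq_iff p_def q_def)
qed

lemma psd_hermitian: "psd M \<Longrightarrow> M $ j $ i = cnj (M $ i $ j)"
  using psd_cinner_mult_sym[of M "axis j 1" "axis i 1"] by (simp add: cinner_axis_mult_axis)

lemma psd_diag:
  assumes "psd M"
  shows "M $ i $ i = of_real (Re (M $ i $ i))" and "0 \<le> Re (M $ i $ i)"
  using assms[unfolded psd_iff_qform, rule_format, of "axis i 1"]
  by (simp_all add: qform_def cinner_axis_mult_axis complex_eq_iff)

lemma qform_axis: "qform M (axis i 1) = M $ i $ i"
  by (simp add: qform_def cinner_axis_mult_axis)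

lemma ketbra_0 [simp]: "ketbra 0 = 0"
  by (simp add: ketbra_def vec_eq_iff)

lemma psd_zero_diag_row:
  assumes psd: "psd M" and zero: "M $ i $ i = 0"
  shows "M $ i $ j = 0"
proof (rule ccontr)
  define s where "s = M $ i $ j"
  assume "M $ i $ j \<noteq> 0"
  then have s_pos: "0 < (cmod s)\<^sup>2"
    by (simp add: s_def)
  \<comment> \<open>With a zero pivot the form at \<open>t e\<^sub>i + e\<^sub>j\<close> is affine in \<open>t\<close>; choose \<open>t\<close> to make it \<open>-1\<close>.\<close>
  define R where "R = (Re (M $ j $ j) + 1) / (2 * (cmod s)\<^sup>2)"
  define t where "t = - of_real R * s"
  have "cnj t * s = - of_real (R * (cmod s)\<^sup>2)"
    by (simp add: t_def cnj_mult_self mult.assoc)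
  moreover have "t * M $ j $ i = cnj (cnj t * s)"
    using psd_hermitian[OF psd, of j i] by (simp add: s_def mult.commute)
  moreover have "qform M (t *s axis i 1 + axis j 1) =
      of_real ((cmod t)\<^sup>2) * M $ i $ i + M $ j $ j + cnj t * s + t * M $ j $ i"
    by (simp add: qform_add_vec qform_smult_vec qform_axis cinner_smult_left cinner_smult_right
        vector_scalar_commute cinner_axis_mult_axis s_def)
  ultimately have "Re (qform M (t *s axis i 1 + axis j 1)) = Re (M $ j $ j) - 2 * R * (cmod s)\<^sup>2"
    using zero by simp
  also have "\<dots> = -1"
    using s_pos by (simp add: R_def field_simps)
  finally show False
    using psd by (simp add: psd_iff_qform) (metis neg_0_le_iff_le not_one_le_zero)
qed

text \<open>A Cholesky step: the Schur complement of a nonzero pivot is positive semidefinite, its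
  form at \<open>x\<close> being that of \<open>M\<close> at \<open>x\<close> shifted along the pivot axis.\<close>
lemma psd_subtract_pivot:
  assumes psd: "psd M"
  obtains c where "psd (M - ketbra c)" and "(M - ketbra c) $ i $ i = 0"
    and "\<And>a. M $ a $ a = 0 \<Longrightarrow> c $ a = 0"
proof (cases "M $ i $ i = 0")
  case True
  then show ?thesis
    using that[of 0] psd by simp
next
  case False
  define d where "d = Re (M $ i $ i)"
  have Mii: "M $ i $ i = of_real d"
    using psd_diag[OF psd] by (simp add: d_def)
  then have d_pos: "0 < d"
    using False psd_diag(2)[OF psd, of i] by (auto simp: d_def less_le)
  have sqrt_d: "of_real (sqrt d) * of_real (sqrt d) = (of_real d :: complex)"
    using d_pos by (simp flip: of_real_mult)
  define c where "c = (\<chi> r. M $ r $ i / of_real (sqrt d))"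
  have ketbra_c: "ketbra c $ a $ b = M $ a $ i * M $ i $ b / of_real d" for a b
    using psd_hermitian[OF psd, of i b] by (simp add: ketbra_def c_def sqrt_d)
  have "psd (M - ketbra c)"
    unfolding psd_iff_qform
  proof
    fix x
    define g where "g = (M *v x) $ i"
    define t where "t = - g / of_real d"
    have "cinner c x = g / of_real (sqrt d)"
      using psd_hermitian[OF psd, of _ i]
      by (simp add: cinner_def c_def g_def matrix_vector_mult_def sum_divide_distrib)
    then have "qform (ketbra c) x = cnj g * g / of_real d"
      by (simp add: qform_ketbra_cnj_mult sqrt_d)
    moreover have
      "qform M (x + t *s axis i 1) = qform M x + cnj t * t * of_real d + t * cnj g + cnj t * g"
      using psd_cinner_mult_sym[OF psd, of x "axis i 1"]
      by (simp add: qform_add_vec qform_smult_vec qform_axis Mii cinner_smult_left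
          cinner_smult_right vector_scalar_commute cinner_axis_left g_def cnj_mult_self)
    moreover have "cnj t * t * of_real d + t * cnj g + cnj t * g = - (cnj g * g / of_real d)"
      using d_pos by (simp add: t_def field_simps)
    ultimately have "qform (M - ketbra c) x = qform M (x + t *s axis i 1)"
      by (simp add: qform_diff add.assoc)
    then show "Im (qform (M - ketbra c) x) = 0 \<and> 0 \<le> Re (qform (M - ketbra c) x)"
      using psd by (simp add: psd_iff_qform)
  qed
  moreover have "(M - ketbra c) $ i $ i = 0"
    using d_pos by (simp add: ketbra_c Mii)
  moreover have "c $ a = 0" if "M $ a $ a = 0" for a
    using psd_zero_diag_row[OF psd that, of i] psd_hermitian[OF psd, of i a]
    by (simp add: c_def)
  ultimately show ?thesis
    using that by blast
qed

lemma psd_eq_sum_ketbra_on: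
  assumes "finite S" and "psd M" and "\<And>a. a \<notin> S \<Longrightarrow> M $ a $ a = 0"
  shows "\<exists>c. M = (\<Sum>t\<in>S. ketbra (c t))"
  using assms
proof (induction S arbitrary: M rule: finite_induct)
  case empty
  then show ?case
    using psd_zero_diag_row by (simp add: vec_eq_iff) blast
next
  case (insert i S)
  obtain c where psd': "psd (M - ketbra c)" and pivot: "(M - ketbra c) $ i $ i = 0"
    and c0: "\<And>a. M $ a $ a = 0 \<Longrightarrow> c $ a = 0"
    using psd_subtract_pivot[OF insert.prems(1)] by metis
  have "(M - ketbra c) $ a $ a = 0" if "a \<notin> S" for a
    using that pivot insert.prems(2)[of a] c0[of a] by (cases "a = i") (simp_all add: ketbra_def)
  then obtain c' where "M - ketbra c = (\<Sum>t\<in>S. ketbra (c' t))"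
    using insert.IH[OF psd'] by blast
  moreover have "(\<Sum>t\<in>S. ketbra ((c'(i := c)) t)) = (\<Sum>t\<in>S. ketbra (c' t))"
    using insert.hyps by (intro sum.cong) auto
  ultimately have "M = (\<Sum>t\<in>insert i S. ketbra ((c'(i := c)) t))"
    using insert.hyps by (simp add: algebra_simps)
  then show ?case
    by blast
qed

lemma psd_eq_sum_ketbra:
  fixes M :: "complex ^ 'n ^ 'n"
  assumes "psd M"
  obtains c :: "'n \<Rightarrow> complex ^ 'n" where "M = (\<Sum>t\<in>UNIV. ketbra (c t))"
  using psd_eq_sum_ketbra_on[OF finite_class.finite_UNIV assms] by blast

section \<open>Antisymmetric tensors and a Pfaffian\<close>

definition flip_tensor :: "complex ^ ('k::finite \<times> 'k) \<Rightarrow> complex ^ ('k \<times> 'k)" where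
  "flip_tensor z = (\<chi> r. z $ (snd r, fst r))"

definition antisym_tensor :: "complex ^ ('k::finite \<times> 'k) \<Rightarrow> bool" where
  "antisym_tensor z \<longleftrightarrow> flip_tensor z = - z"

definition antisym_part :: "complex ^ ('k::finite \<times> 'k) \<Rightarrow> complex ^ ('k \<times> 'k)" where
  "antisym_part u = (1 / 2) *s (u - flip_tensor u)"

definition pairing :: "complex ^ 'n \<Rightarrow> complex ^ 'n \<Rightarrow> complex" where
  "pairing f x = (\<Sum>i\<in>UNIV. f $ i * x $ i)"

text \<open>For antisymmetric \<open>M\<close> this is the Pfaffian of the 4x4 matrix of pairings of \<open>M\<close>
  with \<open>f\<^sub>i \<otimes> f\<^sub>j\<close>; like every 4x4 Pfaffian it vanishes in rank two.\<close>
definition pfaffian4 ::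
  "complex ^ 'k::finite \<Rightarrow> complex ^ 'k \<Rightarrow> complex ^ 'k \<Rightarrow> complex ^ 'k \<Rightarrow>
    complex ^ ('k \<times> 'k) \<Rightarrow> complex"
  where "pfaffian4 f1 f2 f3 f4 M =
    pairing (tensor_vec f1 f2) M * pairing (tensor_vec f3 f4) M
    - pairing (tensor_vec f1 f3) M * pairing (tensor_vec f2 f4) M
    + pairing (tensor_vec f1 f4) M * pairing (tensor_vec f2 f3) M"

lemma sum_swap_pairs: "(\<Sum>r\<in>UNIV. f (snd r, fst r)) = (\<Sum>r\<in>UNIV. f r)"
  by (rule sum.reindex_bij_witness[of _ prod.swap prod.swap]) auto

lemma cinner_flip_tensor: "cinner (flip_tensor x) y = cinner x (flip_tensor y)"
  unfolding cinner_def flip_tensor_def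
  using sum_swap_pairs[of "\<lambda>r. cnj (x $ r) * y $ (snd r, fst r)"] by simp

lemma flip_tensor_flip_tensor [simp]: "flip_tensor (flip_tensor z) = z"
  by (simp add: flip_tensor_def vec_eq_iff)

lemma norm_flip_tensor [simp]: "norm (flip_tensor u) = norm u"
proof -
  have "complex_of_real ((norm u)\<^sup>2) = of_real ((norm (flip_tensor u))\<^sup>2)"
    using cinner_flip_tensor[of "flip_tensor u" u]
    by (simp only: flip_tensor_flip_tensor cinner_self)
  then show ?thesis
    by (simp only: of_real_eq_iff power2_eq_iff_nonneg norm_ge_zero)
qed

lemma antisym_part_antisym: "antisym_tensor (antisym_part u)"
  by (simp add: antisym_tensor_def antisym_part_def flip_tensor_def vec_eq_iff algebra_simps)

lemma antisym_tensor_diff_smult: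
  "antisym_tensor x \<Longrightarrow> antisym_tensor y \<Longrightarrow> antisym_tensor (x - c *s y)"
  by (simp add: antisym_tensor_def flip_tensor_def vec_eq_iff)

lemma cinner_antisym_part:
  assumes "antisym_tensor z"
  shows "cinner (antisym_part u) z = cinner u z"
proof -
  have "cinner u (flip_tensor z) = - cinner u z"
    using assms by (simp add: antisym_tensor_def cinner_def sum_negf)
  then show ?thesis
    by (simp add: antisym_part_def cinner_smult_left cinner_diff_left cinner_flip_tensor)
qed

lemma antisym_part_eq_smult:
  assumes w: "antisym_tensor w" "w \<noteq> 0"
    and orth: "\<And>z. antisym_tensor z \<Longrightarrow> cinner w z = 0 \<Longrightarrow> cinner u z = 0"
  shows "\<exists>c. antisym_part u = c *s w"
proof -
  define c where "c = cinner w (antisym_part u) / cinner w w"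
  define z where "z = antisym_part u - c *s w"
  have z: "antisym_tensor z"
    by (simp add: z_def antisym_tensor_diff_smult antisym_part_antisym w(1))
  have wz: "cinner w z = 0"
    using w(2) by (simp add: z_def c_def cinner_diff_right cinner_smult_right)
  have "cinner z z = cinner (antisym_part u) z - cnj c * cinner w z"
    by (simp add: z_def cinner_diff_left cinner_smult_left)
  also have "\<dots> = 0"
    using orth[OF z wz] by (simp add: wz cinner_antisym_part[OF z])
  finally show ?thesis
    by (auto simp: z_def)
qed

lemma pairing_tensor_vec: "pairing (tensor_vec f g) (tensor_vec x y) = pairing f x * pairing g y"
  by (simp add: pairing_def tensor_vec_def sum_product sum.cartesian_product case_prod_unfold
      algebra_simps flip: UNIV_Times_UNIV)

lemma pairing_flip_tensor: "pairing (tensor_vec f g) (flip_tensor u) = pairing (tensor_vec g f) u"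
  unfolding pairing_def tensor_vec_def flip_tensor_def
  using sum_swap_pairs[of "\<lambda>r. f $ snd r * g $ fst r * u $ r"] by (simp add: mult.commute)

lemma pairing_smult: "pairing f (c *s x) = c * pairing f x"
  and pairing_diff: "pairing f (x - y) = pairing f x - pairing f y"
  and pairing_sum: "pairing f (\<Sum>i\<in>I. u i) = (\<Sum>i\<in>I. pairing f (u i))"
  by (simp_all add: pairing_def algebra_simps sum_subtractf sum_distrib_left sum.swap[of _ I])

lemma pairing_antisym_part:
  "pairing (tensor_vec f g) (antisym_part u) =
    (pairing (tensor_vec f g) u - pairing (tensor_vec g f) u) / 2"
  by (simp add: antisym_part_def pairing_smult pairing_diff pairing_flip_tensor)

lemma pfaffian4_smult: "pfaffian4 f1 f2 f3 f4 (c *s M) = c\<^sup>2 * pfaffian4 f1 f2 f3 f4 M"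
  by (simp add: pfaffian4_def pairing_smult power2_eq_square algebra_simps)

lemma pfaffian4_antisym_part_tensor_vec: "pfaffian4 f1 f2 f3 f4 (antisym_part (tensor_vec x y)) = 0"
  by (simp add: pfaffian4_def pairing_antisym_part pairing_tensor_vec field_simps)

text \<open>If \<open>x \<otimes> y\<close> had a nonzero component along \<open>w\<close>, its antisymmetric part would be a nonzero
  multiple of \<open>w\<close>, contradicting the nonvanishing of the Pfaffian.\<close>
lemma cinner_tensor_vec_eq_0:
  assumes w: "antisym_tensor w" "pfaffian4 f1 f2 f3 f4 w \<noteq> 0"
    and orth: "\<And>z. antisym_tensor z \<Longrightarrow> cinner w z = 0 \<Longrightarrow> cinner (tensor_vec x y) z = 0"
  shows "cinner (tensor_vec x y) w = 0"
proof (rule ccontr)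
  assume nonzero: "cinner (tensor_vec x y) w \<noteq> 0"
  have "w \<noteq> 0"
    using w(2) by (auto simp: pfaffian4_def pairing_def)
  then obtain c where c: "antisym_part (tensor_vec x y) = c *s w"
    using antisym_part_eq_smult[OF w(1) _ orth] by blast
  have "cinner (tensor_vec x y) w = cinner (c *s w) w"
    using cinner_antisym_part[OF w(1), of "tensor_vec x y"] by (simp add: c)
  then have "cinner (tensor_vec x y) w = cnj c * cinner w w"
    by (simp add: cinner_smult_left)
  then have "c \<noteq> 0"
    using nonzero by auto
  then have "pfaffian4 f1 f2 f3 f4 w = pfaffian4 f1 f2 f3 f4 (antisym_part (tensor_vec x y)) / c\<^sup>2"
    by (simp add: c pfaffian4_smult)
  then show False
    using w(2) by (simp add: pfaffian4_antisym_part_tensor_vec)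
qed

section \<open>Separable states\<close>

lemma tensor_vec_smult_left: "tensor_vec (c *s x) y = c *s tensor_vec x y"
  by (simp add: tensor_vec_def vec_eq_iff mult.assoc)

lemma ketbra_of_real_smult: "ketbra (of_real r *s x) = r\<^sup>2 *\<^sub>R ketbra x"
  unfolding vec_eq_iff scaleR_matrix_component by (simp add: ketbra_def power2_eq_square mult_ac)

lemma kron_sum_ketbra:
  "kron (\<Sum>s\<in>UNIV. ketbra (c s)) (\<Sum>t\<in>UNIV. ketbra (d t)) =
    (\<Sum>s\<in>UNIV. \<Sum>t\<in>UNIV. ketbra (tensor_vec (c s) (d t)))"
  by (simp add: kron_def vec_eq_iff ketbra_def tensor_vec_def sum_product
      algebra_simps)

lemma separable_eq_sum_ketbra_tensor_vec:
  fixes \<rho> :: "'k::finite bimat"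
  assumes "separable \<rho>"
  obtains K :: "(nat \<times> 'k \<times> 'k) set" and x y
  where "finite K" and "\<rho> = (\<Sum>k\<in>K. ketbra (tensor_vec (x k) (y k)))"
proof -
  obtain m p and \<sigma> \<tau> :: "nat \<Rightarrow> complex ^ 'k ^ 'k"
    where states: "\<forall>j<m. 0 \<le> p j \<and> density (\<sigma> j) \<and> density (\<tau> j)"
    and \<rho>: "\<rho> = (\<Sum>j<m. (\<chi> r s. complex_of_real (p j) * kron (\<sigma> j) (\<tau> j) $ r $ s))"
    using assms unfolding separable_def by blast
  have psd: "psd (\<sigma> j)" "psd (\<tau> j)" if "j \<in> {..<m}" for j
    using states that by (auto simp: density_def)
  obtain c :: "nat \<Rightarrow> 'k \<Rightarrow> complex ^ 'k" where c: "\<forall>j\<in>{..<m}. \<sigma> j = (\<Sum>s\<in>UNIV. ketbra (c j s))"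
    using bchoice[of _ "\<lambda>j c. \<sigma> j = (\<Sum>s\<in>UNIV. ketbra (c s))"] psd_eq_sum_ketbra psd(1) by metis
  obtain d :: "nat \<Rightarrow> 'k \<Rightarrow> complex ^ 'k" where d: "\<forall>j\<in>{..<m}. \<tau> j = (\<Sum>t\<in>UNIV. ketbra (d j t))"
    using bchoice[of _ "\<lambda>j d. \<tau> j = (\<Sum>t\<in>UNIV. ketbra (d t))"] psd_eq_sum_ketbra psd(2) by metis
  define x where "x = (\<lambda>(j, s, t :: 'k). of_real (sqrt (p j)) *s c j s)"
  define y where "y = (\<lambda>(j :: nat, s :: 'k, t). d j t)"
  have "p j *\<^sub>R kron (\<sigma> j) (\<tau> j) = (\<Sum>(s, t)\<in>UNIV. ketbra (tensor_vec (x (j, s, t)) (y (j, s, t))))"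
    if "j < m" for j
  proof -
    have "p j *\<^sub>R kron (\<sigma> j) (\<tau> j) = (\<Sum>s\<in>UNIV. \<Sum>t\<in>UNIV. p j *\<^sub>R ketbra (tensor_vec (c j s) (d j t)))"
      using c d that by (simp add: kron_sum_ketbra scaleR_sum_right)
    also have "\<dots> = (\<Sum>s\<in>UNIV. \<Sum>t\<in>UNIV. ketbra (tensor_vec (x (j, s, t)) (y (j, s, t))))"
      using states that by (simp add: x_def y_def tensor_vec_smult_left ketbra_of_real_smult)
    finally show ?thesis
      by (simp add: sum.cartesian_product flip: UNIV_Times_UNIV)
  qed
  then have "\<rho> = (\<Sum>k\<in>{..<m} \<times> UNIV. ketbra (tensor_vec (x k) (y k)))"
    by (simp add: \<rho> matrix_of_real_mult_eq_scaleR sum.cartesian_product)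
  then show ?thesis
    by (intro that[of "{..<m} \<times> UNIV"]) simp_all
qed

lemma qform_sum_ketbra:
  "qform (\<Sum>k\<in>K. ketbra (u k)) z = of_real (\<Sum>k\<in>K. (cmod (cinner (u k) z))\<^sup>2)"
  by (simp add: qform_sum qform_ketbra)

lemma separable_qform_antisym_eq_0:
  fixes \<rho> :: "'k::finite bimat"
  assumes "separable \<rho>"
    and w: "antisym_tensor w" "pfaffian4 f1 f2 f3 f4 w \<noteq> 0"
    and vanish: "\<And>z. antisym_tensor z \<Longrightarrow> cinner w z = 0 \<Longrightarrow> qform \<rho> z = 0"
  shows "qform \<rho> w = 0"
proof -
  obtain K :: "(nat \<times> 'k \<times> 'k) set" and x y
    where K: "finite K" and \<rho>: "\<rho> = (\<Sum>k\<in>K. ketbra (tensor_vec (x k) (y k)))"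
    by (rule separable_eq_sum_ketbra_tensor_vec[OF assms(1)])
  have "cinner (tensor_vec (x k) (y k)) z = 0"
    if "k \<in> K" "antisym_tensor z" "cinner w z = 0" for k z
  proof -
    have "complex_of_real (\<Sum>k\<in>K. (cmod (cinner (tensor_vec (x k) (y k)) z))\<^sup>2) = 0"
      using vanish[OF that(2,3)] unfolding \<rho> qform_sum_ketbra .
    then have "(\<Sum>k\<in>K. (cmod (cinner (tensor_vec (x k) (y k)) z))\<^sup>2) = 0"
      by (simp only: of_real_eq_0_iff)
    then show ?thesis
      using K that(1) by (simp add: sum_nonneg_eq_0_iff)
  qed
  then have "cinner (tensor_vec (x k) (y k)) w = 0" if "k \<in> K" for k
    using cinner_tensor_vec_eq_0[OF w] that by blast
  then show ?thesis
    by (simp add: \<rho> qform_sum_ketbra)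
qed

section \<open>The Pfaffian of the antisymmetric part of v\<close>

lemma linear_eq_pairing:
  assumes "Vector_Spaces.linear ((*s) :: complex \<Rightarrow> complex ^ 'n \<Rightarrow> complex ^ 'n) (*) g"
  shows "g y = pairing (\<chi> p. g (axis p 1)) y"
proof -
  interpret g: Vector_Spaces.linear "(*s) :: complex \<Rightarrow> complex ^ 'n \<Rightarrow> complex ^ 'n" "(*)" g
    by (fact assms)
  have "g y = g (\<Sum>p\<in>UNIV. y $ p *s axis p 1)"
    by (simp add: basis_expansion)
  also have "\<dots> = pairing (\<chi> p. g (axis p 1)) y"
    by (simp add: g.sum g.scale pairing_def mult.commute)
  finally show ?thesis .
qed

lemma dual_functional_exists:
  fixes B :: "(complex ^ 'n) set"
  assumes "vec.independent B"
  obtains f where "\<And>x y. x \<in> B \<Longrightarrow> y \<in> B \<Longrightarrow> pairing (f x) y = (if y = x then 1 else 0)"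
proof -
  interpret vector_space_pair "(*s) :: complex \<Rightarrow> complex ^ 'n \<Rightarrow> complex ^ 'n"
      "(*) :: complex \<Rightarrow> complex \<Rightarrow> complex"
    by unfold_locales
  have "\<exists>f. \<forall>y\<in>B. pairing f y = (if y = x then 1 else 0)" for x
  proof -
    obtain g where "Vector_Spaces.linear (*s) (*) g" and "\<forall>y\<in>B. g y = (if y = x then 1 else 0)"
      using linear_independent_extend[OF assms, of "\<lambda>y. if y = x then 1 else 0"] by blast
    then show ?thesis
      using linear_eq_pairing by metis
  qed
  then show ?thesis
    using that by metis
qed

lemma card_Un_images_eq_double:
  assumes "card (a ` {..<n} \<union> b ` {..<n}) = 2 * n"
  shows "inj_on a {..<n}" and "inj_on b {..<n}" and "a ` {..<n} \<inter> b ` {..<n} = {}"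
proof -
  have "card (a ` {..<n}) \<le> n" "card (b ` {..<n}) \<le> n"
    using card_image_le[of "{..<n}"] by auto
  moreover have "card (a ` {..<n}) + card (b ` {..<n}) =
      card (a ` {..<n} \<union> b ` {..<n}) + card (a ` {..<n} \<inter> b ` {..<n})"
    by (rule card_Un_Int) auto
  ultimately have "card (a ` {..<n}) = n" "card (b ` {..<n}) = n"
    and "card (a ` {..<n} \<inter> b ` {..<n}) = 0"
    using assms by linarith+
  then show "inj_on a {..<n}" and "inj_on b {..<n}" and "a ` {..<n} \<inter> b ` {..<n} = {}"
    by (simp_all add: eq_card_imp_inj_on)
qed

text \<open>The functionals are dual to \<open>a\<^sub>0, b\<^sub>0, a\<^sub>1, b\<^sub>1\<close>; against them the antisymmetric part of
  \<open>v\<close> looks like that of \<open>a\<^sub>0 \<otimes> b\<^sub>0 + a\<^sub>1 \<otimes> b\<^sub>1\<close>, a tensor of rank four.\<close>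
lemma pfaffian4_antisym_part_sum_tensor_vec:
  assumes "2 \<le> n" and indep: "vec.independent (a ` {..<n} \<union> b ` {..<n})"
    and card: "card (a ` {..<n} \<union> b ` {..<n}) = 2 * n"
  obtains f1 f2 f3 f4
  where "pfaffian4 f1 f2 f3 f4 (antisym_part (\<Sum>i<n. tensor_vec (a i) (b i))) = 1 / 4"
proof -
  let ?B = "a ` {..<n} \<union> b ` {..<n}"
  let ?v = "\<Sum>i<n. tensor_vec (a i) (b i)"
  obtain f where f: "\<And>x y. x \<in> ?B \<Longrightarrow> y \<in> ?B \<Longrightarrow> pairing (f x) y = (if y = x then 1 else 0)"
    using dual_functional_exists[OF indep] by blast
  note distinct = card_Un_images_eq_double[OF card]
  have a_eq: "a i = a j \<longleftrightarrow> i = j" and b_eq: "b i = b j \<longleftrightarrow> i = j" and a_neq_b: "a i \<noteq> b j"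
    if "i < n" "j < n" for i j
    using that inj_on_eq_iff[OF distinct(1)] inj_on_eq_iff[OF distinct(2)] distinct(3)
    by auto
  have pairing_v: "pairing (tensor_vec (f x) (f y)) ?v =
      (\<Sum>i<n. if a i = x \<and> b i = y then 1 else 0)" if "x \<in> ?B" "y \<in> ?B" for x y
  proof -
    have "pairing (tensor_vec (f x) (f y)) ?v = (\<Sum>i<n. pairing (f x) (a i) * pairing (f y) (b i))"
      by (simp add: pairing_sum pairing_tensor_vec)
    also have "\<dots> = (\<Sum>i<n. if a i = x \<and> b i = y then 1 else 0)"
      using that by (intro sum.cong) (simp_all add: f)
    finally show ?thesis .
  qed
  have "0 < n" "1 < n"
    using assms(1) by auto
  then have "pfaffian4 (f (a 0)) (f (b 0)) (f (a 1)) (f (b 1)) (antisym_part ?v) = 1 / 4"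
    by (simp add: pfaffian4_def pairing_antisym_part pairing_v a_eq b_eq a_neq_b a_neq_b[symmetric]
        cong: sum.cong_simp conj_cong)
  then show ?thesis
    using that by blast
qed

section \<open>Entanglement of gamma\<close>

definition maxent_vec :: "complex ^ ('k::finite \<times> 'k)" where
  "maxent_vec = (\<chi> r. if fst r = snd r then 1 else 0)"

lemma flip_tensor_maxent_vec: "flip_tensor maxent_vec = maxent_vec"
  by (simp add: flip_tensor_def maxent_vec_def eq_commute)

lemma swap_op_mult: "swap_op *v z = flip_tensor z"
proof -
  have "(swap_op *v z) $ r = (\<Sum>s\<in>UNIV. if s = (snd r, fst r) then z $ s else 0)" for r
    unfolding matrix_vector_mult_def swap_op_def vec_lambda_beta
    by (intro sum.cong) (auto simp: prod_eq_iff)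
  then show ?thesis
    by (simp add: vec_eq_iff flip_tensor_def)
qed

lemma qform_mat_1_plus_swap_op:
  "qform (mat 1 + swap_op) x = of_real ((norm (x + flip_tensor x))\<^sup>2 / 2)"
proof -
  have "of_real ((norm (x + flip_tensor x))\<^sup>2) = cinner (x + flip_tensor x) (x + flip_tensor x)"
    by (simp add: cinner_self)
  also have "\<dots> = 2 * (cinner x x + cinner x (flip_tensor x))"
    by (simp add: cinner_add_left cinner_add_right cinner_flip_tensor)
  also have "cinner x x + cinner x (flip_tensor x) = qform (mat 1 + swap_op) x"
    by (simp only: qform_add) (simp add: qform_def swap_op_mult)
  finally show ?thesis
    by simp
qed

lemma psd_mat_1_plus_swap_op: "psd (mat 1 + swap_op)"
  by (simp add: psd_iff_qform qform_mat_1_plus_swap_op)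

lemma qform_mat_1_plus_swap_op_antisym:
  "antisym_tensor z \<Longrightarrow> qform (mat 1 + swap_op) z = 0"
  by (simp add: qform_mat_1_plus_swap_op antisym_tensor_def)

lemma mtrace_add: "mtrace (A + B) = mtrace A + mtrace B"
  by (simp add: mtrace_def sum.distrib)

lemma mtrace_scaleR: "mtrace (c *\<^sub>R A) = of_real c * mtrace A"
  unfolding mtrace_def scaleR_matrix_component by (simp add: sum_distrib_left)

lemma mtrace_mat_1: "mtrace (mat 1 :: complex ^ 'n ^ 'n) = of_nat CARD('n)"
  by (simp add: mtrace_def mat_def)

lemma mtrace_ketbra: "mtrace (ketbra v) = of_real ((norm v)\<^sup>2)"
proof -
  have "mtrace (ketbra v) = cinner v v"
    by (simp add: mtrace_def ketbra_def cinner_def mult.commute)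
  then show ?thesis
    by (simp add: cinner_self)
qed

lemma mtrace_gamma_pos:
  fixes v :: "complex ^ ('k::finite \<times> 'k)"
  assumes "0 \<le> \<epsilon>"
  obtains T where "0 < T" and "mtrace (mat 1 + swap_op + \<epsilon> *\<^sub>R ketbra v) = of_real T"
proof
  show "0 < real CARD('k \<times> 'k) + real CARD('k) + \<epsilon> * (norm v)\<^sup>2"
    using assms by (intro add_pos_nonneg mult_nonneg_nonneg) simp_all
  have "mtrace (swap_op :: 'k bimat) = (\<Sum>i\<in>UNIV. \<Sum>j\<in>UNIV. if i = (j :: 'k) then 1 else 0)"
    unfolding mtrace_def swap_op_def sum.cartesian_product UNIV_Times_UNIV by (intro sum.cong) auto
  then have "mtrace (swap_op :: 'k bimat) = of_nat CARD('k)"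
    by simp
  then show "mtrace (mat 1 + swap_op + \<epsilon> *\<^sub>R ketbra v) =
      of_real (real CARD('k \<times> 'k) + real CARD('k) + \<epsilon> * (norm v)\<^sup>2)"
    by (simp add: mtrace_add mtrace_scaleR mtrace_ketbra mtrace_mat_1)
qed

lemma normalize_op_eq_scaleR: "mtrace M = of_real T \<Longrightarrow> normalize_op M = inverse T *\<^sub>R M"
  unfolding normalize_op_def vec_eq_iff scaleR_matrix_component
  by (simp add: divide_inverse mult.commute of_real_inverse)

lemma density_normalize_op:
  assumes "psd M" and "mtrace M = of_real T" and "0 < T"
  shows "density (normalize_op M)"
  using assms by (simp add: density_def normalize_op_eq_scaleR psd_scaleR mtrace_scaleR)

lemma entangled_normalize_gamma:
  fixes v :: "complex ^ ('k::finite \<times> 'k)"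
  assumes "0 < \<epsilon>" and pf: "pfaffian4 f1 f2 f3 f4 (antisym_part v) \<noteq> 0"
  shows "entangled (normalize_op (mat 1 + swap_op + \<epsilon> *\<^sub>R ketbra v))"
proof -
  let ?\<gamma> = "mat 1 + swap_op + \<epsilon> *\<^sub>R ketbra v"
  let ?w = "antisym_part v"
  obtain T where T: "0 < T" "mtrace ?\<gamma> = of_real T"
    using mtrace_gamma_pos[of \<epsilon> v] assms(1) by auto
  have psd: "psd ?\<gamma>"
    using assms(1) by (simp add: psd_add psd_mat_1_plus_swap_op psd_scaleR psd_ketbra)
  have w: "antisym_tensor ?w"
    by (rule antisym_part_antisym)
  have qform_antisym: "qform (normalize_op ?\<gamma>) z = of_real (inverse T * \<epsilon> * (cmod (cinner ?w z))\<^sup>2)"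
    if "antisym_tensor z" for z
  proof -
    have "qform ?\<gamma> z = qform (mat 1 + swap_op) z + qform (\<epsilon> *\<^sub>R ketbra v) z"
      by (rule qform_add)
    then show ?thesis
      using that by (simp add: normalize_op_eq_scaleR[OF T(2)] qform_scaleR qform_ketbra
          qform_mat_1_plus_swap_op_antisym cinner_antisym_part)
  qed
  have "\<not> separable (normalize_op ?\<gamma>)"
  proof
    assume "separable (normalize_op ?\<gamma>)"
    moreover have "qform (normalize_op ?\<gamma>) z = 0" if "antisym_tensor z" "cinner ?w z = 0" for z
      using that by (simp add: qform_antisym)
    ultimately have "qform (normalize_op ?\<gamma>) ?w = 0"
      using separable_qform_antisym_eq_0[OF _ w pf] by blast
    moreover have "?w \<noteq> 0"
      using pf by (auto simp: pfaffian4_def pairing_def)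
    ultimately show False
      using assms(1) T(1) by (simp add: qform_antisym[OF w])
  qed
  then show ?thesis
    using density_normalize_op[OF psd T(2,1)] by (simp add: entangled_def)
qed

section \<open>Partial transpose and realignment of gamma\<close>

lemma ptrans_add: "ptrans (A + B) = ptrans A + ptrans B"
  and ptrans_scaleR: "ptrans (c *\<^sub>R A) = c *\<^sub>R ptrans A"
  by (simp_all add: ptrans_def vec_eq_iff scaleR_matrix_component)

lemma realign_add: "realign (A + B) = realign A + realign B"
  and realign_scaleR: "realign (c *\<^sub>R A) = c *\<^sub>R realign A"
  by (simp_all add: realign_def vec_eq_iff scaleR_matrix_component)

lemma ptrans_swap_op: "ptrans swap_op = ketbra maxent_vec"
  and realign_mat_1: "realign (mat 1) = ketbra maxent_vec"
  and ptrans_mat_1: "ptrans (mat 1) = mat 1"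
  and realign_swap_op: "realign swap_op = swap_op"
  by (auto simp: ptrans_def realign_def swap_op_def ketbra_def maxent_vec_def mat_def vec_eq_iff
      prod_eq_iff)

definition hermitian :: "complex ^ 'n ^ 'n \<Rightarrow> bool" where
  "hermitian M \<longleftrightarrow> (\<forall>i j. cnj (M $ i $ j) = M $ j $ i)"

lemma hermitian_ptrans_ketbra: "hermitian (ptrans (ketbra v))"
  by (simp add: hermitian_def ptrans_def ketbra_def mult.commute)

lemma hermitian_qform_real:
  assumes "hermitian H"
  shows "Im (qform H x) = 0"
proof -
  have "cnj (qform H x) = (\<Sum>i\<in>UNIV. \<Sum>j\<in>UNIV. cnj (x $ j) * H $ j $ i * x $ i)"
    using assms by (simp add: qform_expand hermitian_def mult_ac)
  also have "\<dots> = qform H x"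
    unfolding qform_expand by (rule sum.swap)
  finally show ?thesis
    by (simp add: complex_eq_iff)
qed

lemma psd_mat_1_plus_small_hermitian:
  fixes H :: "complex ^ 'n ^ 'n"
  assumes "hermitian H"
  shows "\<exists>e0>0. \<forall>e. \<bar>e\<bar> < e0 \<longrightarrow> psd (mat 1 + e *\<^sub>R H)"
proof -
  obtain K where K: "0 < K" "\<And>x. norm (H *v x) \<le> norm x * K"
    using bounded_linear.pos_bounded[OF matrix_vector_mul_bounded_linear] by blast
  have "psd (mat 1 + e *\<^sub>R H)" if e: "\<bar>e\<bar> < 1 / K" for e
    unfolding psd_iff_qform
  proof
    fix x
    have "\<bar>Re (qform H x)\<bar> \<le> norm x * (norm x * K)"
      using Cauchy_Schwarz_ineq2[of x "H *v x"] K(2)[of x]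
      by (simp add: qform_def Re_cinner) (meson mult_left_mono norm_ge_zero order_trans)
    then have "\<bar>e\<bar> * \<bar>Re (qform H x)\<bar> \<le> (1 / K) * (norm x * (norm x * K))"
      using e K(1) by (intro mult_mono) auto
    then have "\<bar>e * Re (qform H x)\<bar> \<le> (norm x)\<^sup>2"
      using K(1) by (simp add: abs_mult power2_eq_square)
    then show "Im (qform (mat 1 + e *\<^sub>R H) x) = 0 \<and> 0 \<le> Re (qform (mat 1 + e *\<^sub>R H) x)"
      using hermitian_qform_real[OF assms, of x]
      by (simp add: qform_add qform_scaleR qform_mat_1)
  qed
  then show ?thesis
    using K(1) by (intro exI[of _ "1 / K"]) simp
qed

lemma ppt_normalize_gamma:
  fixes v :: "complex ^ ('k::finite \<times> 'k)"
  shows "\<exists>e0>0. \<forall>\<epsilon>. 0 \<le> \<epsilon> \<and> \<epsilon> < e0 \<longrightarrow>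
    psd (ptrans (normalize_op (mat 1 + swap_op + \<epsilon> *\<^sub>R ketbra v)))"
proof -
  obtain e0 where e0: "0 < e0" "\<And>e. \<bar>e\<bar> < e0 \<Longrightarrow> psd (mat 1 + e *\<^sub>R ptrans (ketbra v))"
    using psd_mat_1_plus_small_hermitian[OF hermitian_ptrans_ketbra] by auto
  have "psd (ptrans (normalize_op (mat 1 + swap_op + \<epsilon> *\<^sub>R ketbra v)))"
    if \<epsilon>: "0 \<le> \<epsilon>" "\<epsilon> < e0" for \<epsilon>
  proof -
    obtain T where T: "0 < T" "mtrace (mat 1 + swap_op + \<epsilon> *\<^sub>R ketbra v) = of_real T"
      using mtrace_gamma_pos[OF \<epsilon>(1)] by blast
    have "ptrans (mat 1 + swap_op + \<epsilon> *\<^sub>R ketbra v) =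
        (mat 1 + \<epsilon> *\<^sub>R ptrans (ketbra v)) + ketbra maxent_vec"
      by (simp add: ptrans_add ptrans_scaleR ptrans_mat_1 ptrans_swap_op algebra_simps)
    moreover have "psd (mat 1 + \<epsilon> *\<^sub>R ptrans (ketbra v))"
      using \<epsilon> by (intro e0(2)) simp
    ultimately show ?thesis
      using T(1)
      by (simp add: normalize_op_eq_scaleR[OF T(2)] ptrans_scaleR psd_scaleR psd_add psd_ketbra)
  qed
  then show ?thesis
    using e0(1) by blast
qed

lemma norm_le_ketbra_maxent_plus_swap_op:
  fixes u :: "complex ^ ('k::finite \<times> 'k)"
  shows "norm u \<le> norm ((ketbra maxent_vec + swap_op) *v u)"
proof -
  let ?\<Omega> = "maxent_vec :: complex ^ ('k \<times> 'k)"
  define c where "c = cinner ?\<Omega> u"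
  define y where "y = (ketbra ?\<Omega> + swap_op) *v u"
  have y: "y = c *s ?\<Omega> + flip_tensor u"
    by (simp add: y_def c_def matrix_vector_mult_add_rdistrib ketbra_mult swap_op_mult)
  have "cinner ?\<Omega> (flip_tensor u) = c"
    by (simp add: c_def flip_tensor_maxent_vec flip: cinner_flip_tensor)
  moreover from this have "cinner (flip_tensor u) ?\<Omega> = cnj c"
    by (metis cnj_cinner)
  ultimately have "cinner y y = cnj c * c * cinner ?\<Omega> ?\<Omega> + cnj c * c + c * cnj c
      + cinner (flip_tensor u) (flip_tensor u)"
    by (simp add: y cinner_add_left cinner_add_right cinner_smult_left cinner_smult_right
        algebra_simps)
  also have "\<dots> = of_real ((cmod c)\<^sup>2 * (norm ?\<Omega>)\<^sup>2 + 2 * (cmod c)\<^sup>2 + (norm u)\<^sup>2)"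
    by (simp add: cinner_self cnj_mult_self complex_norm_square[symmetric])
  finally have "(norm y)\<^sup>2 = (cmod c)\<^sup>2 * (norm ?\<Omega>)\<^sup>2 + 2 * (cmod c)\<^sup>2 + (norm u)\<^sup>2"
    by (simp only: cinner_self of_real_eq_iff)
  then have "(norm u)\<^sup>2 \<le> (norm y)\<^sup>2"
    by simp
  then have "norm u \<le> norm y"
    by (rule power2_le_imp_le) simp
  then show ?thesis
    by (simp only: y_def)
qed

lemma invertible_add_small_scaleR:
  fixes A E :: "complex ^ 'n ^ 'n"
  assumes A: "\<And>u. norm u \<le> norm (A *v u)"
  shows "\<exists>e0>0. \<forall>e. \<bar>e\<bar> < e0 \<longrightarrow> invertible (A + e *\<^sub>R E)"
proof -
  obtain K where K: "0 < K" "\<And>x. norm (E *v x) \<le> norm x * K"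
    using bounded_linear.pos_bounded[OF matrix_vector_mul_bounded_linear] by blast
  have "invertible (A + e *\<^sub>R E)" if e: "\<bar>e\<bar> < 1 / K" for e
  proof -
    have "u = 0" if u: "(A + e *\<^sub>R E) *v u = 0" for u
    proof -
      have "A *v u + e *\<^sub>R (E *v u) = 0"
        using u by (simp add: matrix_vector_mult_add_rdistrib scaleR_matrix_vector_mult)
      then have "A *v u = - (e *\<^sub>R (E *v u))"
        by (simp add: eq_neg_iff_add_eq_0)
      have "norm u \<le> norm (A *v u)"
        by (rule A)
      also have "\<dots> = \<bar>e\<bar> * norm (E *v u)"
        using \<open>A *v u = - (e *\<^sub>R (E *v u))\<close> by simp
      also have "\<dots> \<le> \<bar>e\<bar> * (norm u * K)"
        by (intro mult_left_mono K(2)) simp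
      finally have "norm u \<le> \<bar>e\<bar> * (norm u * K)" .
      then have "(1 - \<bar>e\<bar> * K) * norm u \<le> 0"
        by (simp add: algebra_simps)
      moreover have "0 < 1 - \<bar>e\<bar> * K"
        using e K(1) by (simp add: field_simps)
      ultimately show "u = 0"
        by (simp add: mult_le_0_iff)
    qed
    then show ?thesis
      using invertible_left_inverse matrix_left_invertible_ker by blast
  qed
  then show ?thesis
    using K(1) by (intro exI[of _ "1 / K"]) simp
qed

lemma invertible_realign_gamma:
  fixes v :: "complex ^ ('k::finite \<times> 'k)"
  shows "\<exists>e0>0. \<forall>\<epsilon>. \<bar>\<epsilon>\<bar> < e0 \<longrightarrow> invertible (realign (mat 1 + swap_op + \<epsilon> *\<^sub>R ketbra v))"
proof -
  have "realign (mat 1 + swap_op + \<epsilon> *\<^sub>R ketbra v) =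
      (ketbra maxent_vec + swap_op) + \<epsilon> *\<^sub>R realign (ketbra v)" for \<epsilon>
    by (simp add: realign_add realign_scaleR realign_mat_1 realign_swap_op)
  then show ?thesis
    using invertible_add_small_scaleR[OF norm_le_ketbra_maxent_plus_swap_op] by simp
qed

lemma gamma_eq: "gamma n a b \<epsilon> = mat 1 + swap_op + \<epsilon> *\<^sub>R ketbra (\<Sum>i<n. tensor_vec (a i) (b i))"
  by (simp add: gamma_def matrix_of_real_mult_eq_scaleR)

theorem mainTheorem1:
  fixes a b :: "nat \<Rightarrow> complex ^ 'k" and n :: nat
  assumes "CARD('k) \<ge> 4" and "n \<ge> 2"
    and "vec.independent (a ` {..<n} \<union> b ` {..<n})"
    and "card (a ` {..<n} \<union> b ` {..<n}) = 2 * n"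
  shows "\<exists>\<epsilon>0 > 0. \<forall>\<epsilon>. 0 < \<epsilon> \<and> \<epsilon> < \<epsilon>0 \<longrightarrow>
           entangled (normalize_op (gamma n a b \<epsilon>)) \<and>
           psd (ptrans (normalize_op (gamma n a b \<epsilon>))) \<and>
           invertible (realign (gamma n a b \<epsilon>))"
proof -
  let ?v = "\<Sum>i<n. tensor_vec (a i) (b i)"
  obtain f1 f2 f3 f4 where "pfaffian4 f1 f2 f3 f4 (antisym_part ?v) = 1 / 4"
    by (rule pfaffian4_antisym_part_sum_tensor_vec[OF assms(2-4)])
  then have pfaffian: "pfaffian4 f1 f2 f3 f4 (antisym_part ?v) \<noteq> 0"
    by auto
  obtain e1 where e1: "0 < e1" "\<forall>\<epsilon>. 0 \<le> \<epsilon> \<and> \<epsilon> < e1 \<longrightarrow>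
      psd (ptrans (normalize_op (mat 1 + swap_op + \<epsilon> *\<^sub>R ketbra ?v)))"
    using ppt_normalize_gamma by blast
  obtain e2 where e2: "0 < e2"
    "\<forall>\<epsilon>. \<bar>\<epsilon>\<bar> < e2 \<longrightarrow> invertible (realign (mat 1 + swap_op + \<epsilon> *\<^sub>R ketbra ?v))"
    using invertible_realign_gamma by blast
  show ?thesis
  proof (intro exI[of _ "min e1 e2"] conjI allI impI)
    show "0 < min e1 e2"
      using e1(1) e2(1) by simp
    fix \<epsilon> :: real
    assume "0 < \<epsilon> \<and> \<epsilon> < min e1 e2"
    then show "entangled (normalize_op (gamma n a b \<epsilon>))"
      and "psd (ptrans (normalize_op (gamma n a b \<epsilon>)))"
      and "invertible (realign (gamma n a b \<epsilon>))"
      using entangled_normalize_gamma[OF _ pfaffian] e1(2) e2(2) by (simp_all add: gamma_eq)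
  qed
qed

end
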